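(* Let $(W,S)$ be a Coxeter system with $S$ finite, $\Phi_W$ its root system viewed as a rack with $\alpha\ast\beta=t_\beta(\alpha)$, and $p:\Phi_W\to Q_W$ the map $\alpha\mapsto t_\alpha$. Then $p$ induces an isomorphism $\operatorname{Ad}(\Phi_W)\cong\operatorname{Ad}(Q_W)$, given by $e_\alpha\mapsto e_{p(\alpha)}$.
   Context: A Coxeter system $(W,S)$: $S$ finite, $m:S\times S\to\mathbb{N}\cup\{\infty\}$ with $m(s,s)=1$, $2\le m(s,t)=m(t,s)\le\infty$ for $s\ne t$, $W=\langle s\in S\mid (st)^{m(s,t)}=1\ (m(s,t)<\infty)\rangle$. Let $V$ be the real vector space with basis $\{\alpha_s\mid s\in S\}$ and $B$ the symmetric bilinear form with $B(\alpha_s,\alpha_t)=-\cos(\pi/m(s,t))$ (interpreted as $-1$ when $m(s,t)=\infty$). The geometric representation $\sigma:W\to GL(V)$ sends $s$ to $\sigma_s(\lambda)=\lambda-2B(\alpha_s,\lambda)\alpha_s$; it is faithful and preserves $B$, and elements of $\sigma(W)$ are identified with elements of $W$. The root system is $\Phi_W=\{w(\alpha_s)\mid s\in S,w\in W\}$, and for $\alpha\in\Phi_W$, $t_\alpha(\lambda)=\lambda-2B(\alpha,\lambda)\alpha$, which is an element of $W$ lying in $Q_W$. A rack is a set $X$ with a binary operation $\ast$ such that $(x\ast y)\ast z=(x\ast z)\ast(y\ast z)$ and each map $x\mapsto x\ast y$ is bijective; a quandle is a rack with $x\ast x=x$. The Coxeter quandle is $Q_W=\bigcup_{w\in W}w^{-1}Sw$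 with $x\ast y=yxy$. For a rack or quandle $X$, $\operatorname{Ad}(X)=\langle e_x\ (x\in X)\mid e_y^{-1}e_xe_y=e_{x\ast y}\ (x,y\in X)\rangle$. *)

theory Defs
  imports Complex_Main "HOL-Library.Extended_Nat" "HOL-Algebra.Group"
begin

text \<open>The generating set S is the (finite) type 's. A Coxeter matrix is
 m :: 's => 's => enat, where the value infinity means m(s,t) = infinity.\<close>

definition coxeter_matrix :: "('s::finite \<Rightarrow> 's \<Rightarrow> enat) \<Rightarrow> bool" where
  "coxeter_matrix m \<longleftrightarrow>
     (\<forall>s. m s s = 1) \<and>
     (\<forall>s t. m s t = m t s) \<and>
     (\<forall>s t. s \<noteq> t \<longrightarrow> 2 \<le> m s t)"

text \<open>V = real vector space with basis alpha_s (s in S), modelled as 's => real.\<close>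

definition simple_root :: "'s \<Rightarrow> ('s \<Rightarrow> real)" where
  "simple_root s = (\<lambda>t. if t = s then 1 else 0)"

definition bcoef :: "('s \<Rightarrow> 's \<Rightarrow> enat) \<Rightarrow> 's \<Rightarrow> 's \<Rightarrow> real" where
  "bcoef m s t = (case m s t of enat k \<Rightarrow> - cos (pi / real k) | \<infinity> \<Rightarrow> -1)"

definition coxB :: "('s::finite \<Rightarrow> 's \<Rightarrow> enat) \<Rightarrow> ('s \<Rightarrow> real) \<Rightarrow> ('s \<Rightarrow> real) \<Rightarrow> real" where
  "coxB m u v = (\<Sum>s\<in>UNIV. \<Sum>t\<in>UNIV. u s * v t * bcoef m s t)"

definition refl_map :: "('s::finite \<Rightarrow> 's \<Rightarrow> enat) \<Rightarrow> ('s \<Rightarrow> real) \<Rightarrow> ('s \<Rightarrow> real) \<Rightarrow> ('s \<Rightarrow> real)" where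
  "refl_map m a v = (\<lambda>t. v t - 2 * coxB m a v * a t)"

definition sigma :: "('s::finite \<Rightarrow> 's \<Rightarrow> enat) \<Rightarrow> 's \<Rightarrow> ('s \<Rightarrow> real) \<Rightarrow> ('s \<Rightarrow> real)" where
  "sigma m s = refl_map m (simple_root s)"

text \<open>W, identified with its (faithful) image sigma(W) in GL(V): the group
 generated by the sigma_s (each sigma_s is an involution, so the monoid
 generated is already the group).\<close>
inductive_set coxW :: "('s::finite \<Rightarrow> 's \<Rightarrow> enat) \<Rightarrow> (('s \<Rightarrow> real) \<Rightarrow> ('s \<Rightarrow> real)) set"
  for m where
    id_in: "id \<in> coxW m"
  | step: "w \<in> coxW m \<Longrightarrow> sigma m s \<circ> w \<in> coxW m"

definition roots :: "('s::finite \<Rightarrow> 's \<Rightarrow> enat) \<Rightarrow> ('s \<Rightarrow> real) set" where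
  "roots m = {w (simple_root s) | w s. w \<in> coxW m}"

definition coxQ :: "('s::finite \<Rightarrow> 's \<Rightarrow> enat) \<Rightarrow> (('s \<Rightarrow> real) \<Rightarrow> ('s \<Rightarrow> real)) set" where
  "coxQ m = {inv_into UNIV w \<circ> sigma m s \<circ> w | w s. w \<in> coxW m}"

definition root_op :: "('s::finite \<Rightarrow> 's \<Rightarrow> enat) \<Rightarrow> ('s \<Rightarrow> real) \<Rightarrow> ('s \<Rightarrow> real) \<Rightarrow> ('s \<Rightarrow> real)" where
  "root_op m a b = refl_map m b a"

definition quandle_op :: "('v \<Rightarrow> 'v) \<Rightarrow> ('v \<Rightarrow> 'v) \<Rightarrow> ('v \<Rightarrow> 'v)" where
  "quandle_op x y = y \<circ> x \<circ> y"

text \<open>Words in the generators e_x^{\<pm>1}: (x, True) stands for e_x, (x, False) for e_x^{-1}.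
 ad_eq is the congruence on words generated by free cancellation and the
 relations e_y^{-1} e_x e_y = e_{x*y}.\<close>

inductive ad_eq :: "'a set \<Rightarrow> ('a \<Rightarrow> 'a \<Rightarrow> 'a) \<Rightarrow> ('a \<times> bool) list \<Rightarrow> ('a \<times> bool) list \<Rightarrow> bool"
  for X op where
    refl: "w \<in> lists (X \<times> UNIV) \<Longrightarrow> ad_eq X op w w"
  | sym: "ad_eq X op u v \<Longrightarrow> ad_eq X op v u"
  | trans: "ad_eq X op u v \<Longrightarrow> ad_eq X op v w \<Longrightarrow> ad_eq X op u w"
  | cancel: "x \<in> X \<Longrightarrow> u \<in> lists (X \<times> UNIV) \<Longrightarrow> v \<in> lists (X \<times> UNIV) \<Longrightarrow>
       ad_eq X op (u @ [(x, b), (x, \<not> b)] @ v) (u @ v)"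
  | rel: "x \<in> X \<Longrightarrow> y \<in> X \<Longrightarrow> u \<in> lists (X \<times> UNIV) \<Longrightarrow> v \<in> lists (X \<times> UNIV) \<Longrightarrow>
       ad_eq X op (u @ [(y, False), (x, True), (y, True)] @ v) (u @ [(op x y, True)] @ v)"

definition ad_class :: "'a set \<Rightarrow> ('a \<Rightarrow> 'a \<Rightarrow> 'a) \<Rightarrow> ('a \<times> bool) list \<Rightarrow> ('a \<times> bool) list set" where
  "ad_class X op w = {v. ad_eq X op w v}"

definition Ad :: "'a set \<Rightarrow> ('a \<Rightarrow> 'a \<Rightarrow> 'a) \<Rightarrow> (('a \<times> bool) list set) monoid" where
  "Ad X op = \<lparr> carrier = ad_class X op ` lists (X \<times> UNIV),
               mult = (\<lambda>A B. {w. \<exists>a\<in>A. \<exists>b\<in>B. ad_eq X op (a @ b) w}),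
               one = ad_class X op [] \<rparr>"

definition ad_gen :: "'a set \<Rightarrow> ('a \<Rightarrow> 'a \<Rightarrow> 'a) \<Rightarrow> 'a \<Rightarrow> ('a \<times> bool) list set" where
  "ad_gen X op x = ad_class X op [(x, True)]"

end

(* The map \<alpha> \<mapsto> t_\<alpha> is a surjective rack morphism \<Phi>_W \<rightarrow> Q_W, because t_(w \<alpha>) = w t_\<alpha> w^-1
   for w in W, and its fibres are the pairs {\<alpha>, -\<alpha>}. In Ad(\<Phi>_W) the relation for \<alpha> \<ast> \<alpha> = -\<alpha>
   forces e_(-\<alpha>) = e_\<alpha>. A surjective rack morphism whose fibres become equal in Ad of the source
   induces an isomorphism of Ad groups: a set-theoretic section of it inverts the induced map
   on words. *)

theory Submission
  imports Defs
begin

declare ad_eq.trans [trans]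

lemma ad_eq_in_lists:
  assumes "\<And>x y. x \<in> X \<Longrightarrow> y \<in> X \<Longrightarrow> op x y \<in> X"
  shows "ad_eq X op u v \<Longrightarrow> u \<in> lists (X \<times> UNIV) \<and> v \<in> lists (X \<times> UNIV)"
  by (induction rule: ad_eq.induct) (auto simp: assms)

lemma ad_eq_append_context:
  assumes "ad_eq X op u v" "p \<in> lists (X \<times> UNIV)" "q \<in> lists (X \<times> UNIV)"
  shows "ad_eq X op (p @ u @ q) (p @ v @ q)"
  using assms
proof (induction rule: ad_eq.induct)
  case (refl w)
  then show ?case by (intro ad_eq.refl) auto
next
  case (sym u v)
  then show ?case by (blast intro: ad_eq.sym)
next
  case (trans u v w)
  then show ?case by (blast intro: ad_eq.trans)
next
  case (cancel x u v b)
  have "ad_eq X op ((p @ u) @ [(x, b), (x, \<not> b)] @ (v @ q)) ((p @ u) @ (v @ q))"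
    by (rule ad_eq.cancel) (use cancel in auto)
  then show ?case by simp
next
  case (rel x y u v)
  have "ad_eq X op ((p @ u) @ [(y, False), (x, True), (y, True)] @ (v @ q))
                   ((p @ u) @ [(op x y, True)] @ (v @ q))"
    by (rule ad_eq.rel) (use rel in auto)
  then show ?case by simp
qed

lemma map_apfst_in_lists:
  "w \<in> lists (X \<times> UNIV) \<Longrightarrow> (\<And>x. x \<in> X \<Longrightarrow> f x \<in> Y) \<Longrightarrow> map (apfst f) w \<in> lists (Y \<times> UNIV)"
  by (induction w) auto

lemma ad_eq_map_apfst:
  assumes f: "\<And>x. x \<in> X \<Longrightarrow> f x \<in> Y"
    and f_op: "\<And>x y. x \<in> X \<Longrightarrow> y \<in> X \<Longrightarrow> ad_eq Y op' [(f (op x y), True)] [(op' (f x) (f y), True)]"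
  shows "ad_eq X op u v \<Longrightarrow> ad_eq Y op' (map (apfst f) u) (map (apfst f) v)"
proof (induction rule: ad_eq.induct)
  case (refl w)
  then show ?case by (intro ad_eq.refl map_apfst_in_lists f)
next
  case (sym u v)
  then show ?case by (blast intro: ad_eq.sym)
next
  case (trans u v w)
  then show ?case by (blast intro: ad_eq.trans)
next
  case (cancel x u v b)
  have uv: "map (apfst f) u \<in> lists (Y \<times> UNIV)" "map (apfst f) v \<in> lists (Y \<times> UNIV)"
    using cancel by (simp_all add: map_apfst_in_lists[OF _ f])
  have "ad_eq Y op' (map (apfst f) u @ [(f x, b), (f x, \<not> b)] @ map (apfst f) v)
                    (map (apfst f) u @ map (apfst f) v)"
    by (rule ad_eq.cancel) (use cancel uv in \<open>auto intro: f\<close>)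
  then show ?case by simp
next
  case (rel x y u v)
  have uv: "map (apfst f) u \<in> lists (Y \<times> UNIV)" "map (apfst f) v \<in> lists (Y \<times> UNIV)"
    using rel by (simp_all add: map_apfst_in_lists[OF _ f])
  have "ad_eq Y op' (map (apfst f) u @ [(f y, False), (f x, True), (f y, True)] @ map (apfst f) v)
                    (map (apfst f) u @ [(op' (f x) (f y), True)] @ map (apfst f) v)"
    by (rule ad_eq.rel) (use rel uv in \<open>auto intro: f\<close>)
  also have "ad_eq Y op' \<dots> (map (apfst f) u @ [(f (op x y), True)] @ map (apfst f) v)"
    by (rule ad_eq_append_context[OF ad_eq.sym[OF f_op]]) (use rel uv in auto)
  finally show ?case by simp
qed

lemma ad_eq_inverse_letter:
  assumes "z \<in> X" "x \<in> X" "ad_eq X op [(z, True)] [(x, True)]"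
  shows "ad_eq X op [(z, b)] [(x, b)]"
proof (cases b)
  case True
  then show ?thesis using assms by simp
next
  case False
  have "ad_eq X op [(z, False)] [(z, False), (x, True), (x, False)]"
    using ad_eq.sym[OF ad_eq.cancel[of x X "[(z, False)]" "[]" op True]] assms by simp
  also have "ad_eq X op \<dots> [(z, False), (z, True), (x, False)]"
    using ad_eq_append_context[OF ad_eq.sym[OF assms(3)], of "[(z, False)]" "[(x, False)]"] assms
    by simp
  also have "ad_eq X op \<dots> [(x, False)]"
    using ad_eq.cancel[of z X "[]" "[(x, False)]" op False] assms by simp
  finally show ?thesis using False by simp
qed

lemma ad_class_eq_iff:
  assumes "a \<in> lists (X \<times> UNIV)" "b \<in> lists (X \<times> UNIV)"
  shows "ad_class X op a = ad_class X op b \<longleftrightarrow> ad_eq X op a b"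
proof
  assume "ad_class X op a = ad_class X op b"
  moreover have "b \<in> ad_class X op b"
    using assms by (auto simp: ad_class_def intro: ad_eq.refl)
  ultimately show "ad_eq X op a b" by (auto simp: ad_class_def)
next
  assume "ad_eq X op a b"
  then show "ad_class X op a = ad_class X op b"
    by (auto simp: ad_class_def intro: ad_eq.trans ad_eq.sym)
qed

lemma Ad_mult_ad_class:
  assumes cl: "\<And>x y. x \<in> X \<Longrightarrow> y \<in> X \<Longrightarrow> op x y \<in> X"
    and a: "a \<in> lists (X \<times> UNIV)" and b: "b \<in> lists (X \<times> UNIV)"
  shows "ad_class X op a \<otimes>\<^bsub>Ad X op\<^esub> ad_class X op b = ad_class X op (a @ b)"
proof -
  have "ad_eq X op (a @ b) w"
    if "ad_eq X op a a'" "ad_eq X op b b'" "ad_eq X op (a' @ b') w" for a' b' w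
  proof -
    have a': "a' \<in> lists (X \<times> UNIV)"
      using ad_eq_in_lists[OF cl that(1)] by blast
    have "ad_eq X op (a @ b) (a' @ b)"
      using ad_eq_append_context[OF that(1), of "[]" b] b by simp
    also have "ad_eq X op \<dots> (a' @ b')"
      using ad_eq_append_context[OF that(2), of a' "[]"] a' by simp
    also note that(3)
    finally show ?thesis .
  qed
  moreover have "a \<in> ad_class X op a" "b \<in> ad_class X op b"
    using a b by (auto simp: ad_class_def intro: ad_eq.refl)
  ultimately show ?thesis by (auto simp: Ad_def ad_class_def)
qed

definition Ad_map :: "('a \<Rightarrow> 'b) \<Rightarrow> 'b set \<Rightarrow> ('b \<Rightarrow> 'b \<Rightarrow> 'b) \<Rightarrow>
    ('a \<times> bool) list set \<Rightarrow> ('b \<times> bool) list set" where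
  "Ad_map f Y op' A = {w. \<exists>a\<in>A. ad_eq Y op' (map (apfst f) a) w}"

locale rack_morphism =
  fixes X :: "'a set" and op :: "'a \<Rightarrow> 'a \<Rightarrow> 'a"
    and Y :: "'b set" and op' :: "'b \<Rightarrow> 'b \<Rightarrow> 'b" and f :: "'a \<Rightarrow> 'b"
  assumes op_closed: "\<And>x y. x \<in> X \<Longrightarrow> y \<in> X \<Longrightarrow> op x y \<in> X"
    and maps_to: "\<And>x. x \<in> X \<Longrightarrow> f x \<in> Y"
    and map_op: "\<And>x y. x \<in> X \<Longrightarrow> y \<in> X \<Longrightarrow> f (op x y) = op' (f x) (f y)"
begin

lemma ad_eq_map:
  "ad_eq X op u v \<Longrightarrow> ad_eq Y op' (map (apfst f) u) (map (apfst f) v)"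
proof (rule ad_eq_map_apfst)
  show "ad_eq Y op' [(f (op x y), True)] [(op' (f x) (f y), True)]" if "x \<in> X" "y \<in> X" for x y
    using that by (simp add: ad_eq.refl maps_to op_closed flip: map_op)
qed (rule maps_to)

lemma map_in_lists: "a \<in> lists (X \<times> UNIV) \<Longrightarrow> map (apfst f) a \<in> lists (Y \<times> UNIV)"
  by (rule map_apfst_in_lists) (auto intro: maps_to)

lemma Ad_map_ad_class:
  assumes "a \<in> lists (X \<times> UNIV)"
  shows "Ad_map f Y op' (ad_class X op a) = ad_class Y op' (map (apfst f) a)"
proof -
  have "a \<in> ad_class X op a"
    using assms by (auto simp: ad_class_def intro: ad_eq.refl)
  then show ?thesis
    by (auto simp: Ad_map_def ad_class_def dest: ad_eq_map intro: ad_eq.trans)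
qed

lemma Ad_map_hom:
  assumes Y_closed: "\<And>x y. x \<in> Y \<Longrightarrow> y \<in> Y \<Longrightarrow> op' x y \<in> Y"
  shows "Ad_map f Y op' \<in> hom (Ad X op) (Ad Y op')"
proof (rule homI)
  fix A assume "A \<in> carrier (Ad X op)"
  then obtain a where "a \<in> lists (X \<times> UNIV)" "A = ad_class X op a"
    by (auto simp: Ad_def)
  then show "Ad_map f Y op' A \<in> carrier (Ad Y op')"
    by (auto simp: Ad_def Ad_map_ad_class map_in_lists)
next
  fix A B assume "A \<in> carrier (Ad X op)" "B \<in> carrier (Ad X op)"
  then obtain a b where ab: "a \<in> lists (X \<times> UNIV)" "b \<in> lists (X \<times> UNIV)"
    and "A = ad_class X op a" "B = ad_class X op b"
    by (auto simp: Ad_def)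
  then show "Ad_map f Y op' (A \<otimes>\<^bsub>Ad X op\<^esub> B) = Ad_map f Y op' A \<otimes>\<^bsub>Ad Y op'\<^esub> Ad_map f Y op' B"
    by (simp add: Ad_mult_ad_class op_closed Y_closed Ad_map_ad_class map_in_lists)
qed

end

locale rack_quotient = rack_morphism +
  assumes surjective: "Y \<subseteq> f ` X"
    and fibres_identified:
      "\<And>x x'. x \<in> X \<Longrightarrow> x' \<in> X \<Longrightarrow> f x = f x' \<Longrightarrow> ad_eq X op [(x, True)] [(x', True)]"
begin

lemma op'_closed:
  assumes "x \<in> Y" "y \<in> Y"
  shows "op' x y \<in> Y"
proof -
  obtain x' y' where "x' \<in> X" "y' \<in> X" "x = f x'" "y = f y'"
    using assms surjective by blast
  then show ?thesis by (simp flip: map_op add: maps_to op_closed)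
qed

lemma ad_eq_if_map_eq:
  "a \<in> lists (X \<times> UNIV) \<Longrightarrow> b \<in> lists (X \<times> UNIV) \<Longrightarrow> map (apfst f) a = map (apfst f) b \<Longrightarrow>
   ad_eq X op a b"
proof (induction a arbitrary: b)
  case Nil
  then show ?case by (simp add: ad_eq.refl)
next
  case (Cons c a)
  obtain x \<beta> x' b' where c: "c = (x, \<beta>)" and b: "b = (x', \<beta>) # b'"
    and fx: "f x = f x'" and fa: "map (apfst f) a = map (apfst f) b'"
    using Cons.prems(3) by (cases c; cases b) auto
  have x: "x \<in> X" "x' \<in> X" "a \<in> lists (X \<times> UNIV)" "b' \<in> lists (X \<times> UNIV)"
    using Cons.prems c b by auto
  have "ad_eq X op ((x, \<beta>) # a) ((x', \<beta>) # a)"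
    using ad_eq_append_context[OF ad_eq_inverse_letter[OF x(1,2) fibres_identified], of "[]" a] x fx
    by simp
  also have "ad_eq X op \<dots> ((x', \<beta>) # b')"
    using ad_eq_append_context[OF Cons.IH[OF x(3,4) fa], of "[(x', \<beta>)]" "[]"] x by simp
  finally show ?case using c b by simp
qed

lemma inj_on_Ad_map: "inj_on (Ad_map f Y op') (carrier (Ad X op))"
proof (rule inj_onI)
  obtain g where g: "\<And>y. y \<in> Y \<Longrightarrow> g y \<in> X" "\<And>y. y \<in> Y \<Longrightarrow> f (g y) = y"
    using surjective by (metis f_inv_into_f inv_into_into subsetD)
  have g_ad_eq: "ad_eq X op (map (apfst g) u) (map (apfst g) v)" if "ad_eq Y op' u v" for u v
  proof (rule ad_eq_map_apfst[OF g(1) _ that])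
    show "ad_eq X op [(g (op' y z), True)] [(op (g y) (g z), True)]" if "y \<in> Y" "z \<in> Y" for y z
      using that by (intro fibres_identified) (simp_all add: g op'_closed op_closed map_op)
  qed
  have retract: "ad_eq X op (map (apfst g) (map (apfst f) a)) a" if "a \<in> lists (X \<times> UNIV)" for a
  proof (rule ad_eq_if_map_eq)
    show "map (apfst g) (map (apfst f) a) \<in> lists (X \<times> UNIV)"
      using map_in_lists[OF that] by (rule map_apfst_in_lists) (rule g(1))
    show "map (apfst f) (map (apfst g) (map (apfst f) a)) = map (apfst f) a"
      using map_in_lists[OF that] by (induction a) (auto simp: g(2))
  qed fact
  fix A B assume "A \<in> carrier (Ad X op)" "B \<in> carrier (Ad X op)"
    and eq: "Ad_map f Y op' A = Ad_map f Y op' B"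
  then obtain a b where ab: "a \<in> lists (X \<times> UNIV)" "b \<in> lists (X \<times> UNIV)"
    and AB: "A = ad_class X op a" "B = ad_class X op b"
    by (auto simp: Ad_def)
  have "ad_eq Y op' (map (apfst f) a) (map (apfst f) b)"
    using eq ab AB by (simp add: Ad_map_ad_class ad_class_eq_iff map_in_lists)
  then have "ad_eq X op a b"
    using g_ad_eq retract[OF ab(1)] retract[OF ab(2)] by (meson ad_eq.sym ad_eq.trans)
  then show "A = B" using ab AB ad_class_eq_iff by blast
qed

lemma lists_in_map_image:
  "c \<in> lists (Y \<times> UNIV) \<Longrightarrow> \<exists>a\<in>lists (X \<times> UNIV). map (apfst f) a = c"
proof (induction c)
  case (Cons yb c)
  obtain y \<beta> where "yb = (y, \<beta>)" by fastforce
  moreover obtain x where "x \<in> X" "y = f x"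
    using Cons.prems surjective \<open>yb = (y, \<beta>)\<close> by auto
  moreover obtain a where "a \<in> lists (X \<times> UNIV)" "map (apfst f) a = c"
    using Cons by auto
  ultimately show ?case by (intro bexI[of _ "(x, \<beta>) # a"]) auto
qed simp

lemma Ad_map_image: "Ad_map f Y op' ` carrier (Ad X op) = carrier (Ad Y op')"
proof
  show "Ad_map f Y op' ` carrier (Ad X op) \<subseteq> carrier (Ad Y op')"
    using Ad_map_hom[OF op'_closed] by (auto simp: hom_def)
next
  show "carrier (Ad Y op') \<subseteq> Ad_map f Y op' ` carrier (Ad X op)"
  proof
    fix C assume "C \<in> carrier (Ad Y op')"
    then obtain c where "c \<in> lists (Y \<times> UNIV)" "C = ad_class Y op' c"
      by (auto simp: Ad_def)
    then obtain a where "a \<in> lists (X \<times> UNIV)" "C = Ad_map f Y op' (ad_class X op a)"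
      using lists_in_map_image by (auto simp: Ad_map_ad_class)
    then show "C \<in> Ad_map f Y op' ` carrier (Ad X op)"
      by (auto simp: Ad_def)
  qed
qed

theorem Ad_map_iso: "Ad_map f Y op' \<in> iso (Ad X op) (Ad Y op')"
  using Ad_map_hom[OF op'_closed] inj_on_Ad_map Ad_map_image
  by (simp add: iso_def bij_betw_def)

lemma Ad_map_ad_gen: "x \<in> X \<Longrightarrow> Ad_map f Y op' (ad_gen X op x) = ad_gen Y op' (f x)"
  by (simp add: ad_gen_def Ad_map_ad_class)

end

lemma coxB_add_left: "coxB m (\<lambda>t. u t + c * v t) w = coxB m u w + c * coxB m v w"
  by (simp add: coxB_def algebra_simps sum.distrib sum_distrib_left)

lemma coxB_add_right: "coxB m w (\<lambda>t. u t + c * v t) = coxB m w u + c * coxB m w v"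
  by (simp add: coxB_def algebra_simps sum.distrib sum_distrib_left)

lemma coxB_scale_left: "coxB m (\<lambda>t. c * v t) w = c * coxB m v w"
  by (simp add: coxB_def algebra_simps sum_distrib_left)

lemma coxB_scale_right: "coxB m w (\<lambda>t. c * v t) = c * coxB m w v"
  by (simp add: coxB_def algebra_simps sum_distrib_left)

lemma coxB_commute:
  assumes "coxeter_matrix m"
  shows "coxB m u v = coxB m v u"
proof -
  have "bcoef m s t = bcoef m t s" for s t
    using assms by (simp add: coxeter_matrix_def bcoef_def)
  then show ?thesis
    unfolding coxB_def by (subst sum.swap) (simp add: mult.commute mult.left_commute)
qed

lemma coxB_simple_root_self:
  assumes "coxeter_matrix m"
  shows "coxB m (simple_root s) (simple_root s) = 1"
proof -
  have "coxB m (simple_root s) (simple_root s) = bcoef m s s"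
    by (simp add: coxB_def simple_root_def if_distrib if_distribR sum.If_cases)
  also have "\<dots> = 1"
    using assms by (simp add: coxeter_matrix_def bcoef_def one_enat_def)
  finally show ?thesis .
qed

lemma refl_map_eq: "refl_map m a v = (\<lambda>t. v t + (-2 * coxB m a v) * a t)"
  by (simp add: refl_map_def)

lemma refl_map_lin_comb:
  "refl_map m a (\<lambda>t. u t + c * v t) = (\<lambda>t. refl_map m a u t + c * refl_map m a v t)"
  by (simp add: refl_map_def coxB_add_right algebra_simps)

lemma coxB_refl_map:
  assumes "coxeter_matrix m" and "coxB m a a = 1"
  shows "coxB m (refl_map m a u) (refl_map m a v) = coxB m u v"
proof -
  define c d where "c = -2 * coxB m a u" and "d = -2 * coxB m a v"
  have "coxB m (refl_map m a u) (refl_map m a v) = coxB m (\<lambda>t. u t + c * a t) (\<lambda>t. v t + d * a t)"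
    by (simp add: refl_map_eq c_def d_def)
  also have "\<dots> = coxB m u v + d * coxB m u a + c * (coxB m a v + d * coxB m a a)"
    by (simp only: coxB_add_left coxB_add_right)
  also have "\<dots> = coxB m u v"
    using assms coxB_commute[of m u a] by (simp add: c_def d_def algebra_simps)
  finally show ?thesis .
qed

lemma refl_map_refl_map:
  assumes "coxB m a a = 1"
  shows "refl_map m a (refl_map m a v) = v"
proof -
  define c where "c = -2 * coxB m a v"
  have "refl_map m a (refl_map m a v) = refl_map m a (\<lambda>t. v t + c * a t)"
    by (simp only: refl_map_eq c_def)
  also have "\<dots> = (\<lambda>t. v t + c * a t + (-2 * (coxB m a v + c * coxB m a a)) * a t)"
    by (simp only: refl_map_eq coxB_add_right)
  also have "\<dots> = v"
    using assms by (simp add: c_def fun_eq_iff algebra_simps)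
  finally show ?thesis .
qed

lemma coxW_comp: "w1 \<in> coxW m \<Longrightarrow> w2 \<in> coxW m \<Longrightarrow> w1 \<circ> w2 \<in> coxW m"
  by (induction w1 rule: coxW.induct) (auto simp: comp_assoc intro: coxW.step)

lemma sigma_in_coxW: "sigma m s \<in> coxW m"
  using coxW.step[OF coxW.id_in, of m s] by simp

definition preserves_coxB :: "('s::finite \<Rightarrow> 's \<Rightarrow> enat) \<Rightarrow> (('s \<Rightarrow> real) \<Rightarrow> ('s \<Rightarrow> real)) \<Rightarrow> bool"
  where "preserves_coxB m w \<longleftrightarrow> (\<forall>u v. coxB m (w u) (w v) = coxB m u v)"

definition preserves_lin_comb :: "(('s \<Rightarrow> real) \<Rightarrow> ('s \<Rightarrow> real)) \<Rightarrow> bool"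
  where "preserves_lin_comb w \<longleftrightarrow> (\<forall>u v c. w (\<lambda>t. u t + c * v t) = (\<lambda>t. w u t + c * w v t))"

lemma coxW_invertible_isometry:
  assumes cm: "coxeter_matrix m"
  shows "w \<in> coxW m \<Longrightarrow>
    preserves_coxB m w \<and> preserves_lin_comb w \<and> (\<exists>w'\<in>coxW m. w' \<circ> w = id \<and> w \<circ> w' = id)"
proof (induction rule: coxW.induct)
  case id_in
  show ?case
    unfolding preserves_coxB_def preserves_lin_comb_def
    by (intro conjI bexI[of _ id] coxW.id_in) simp_all
next
  case (step w s)
  have ss: "coxB m (simple_root s) (simple_root s) = 1"
    using coxB_simple_root_self[OF cm] .
  then have sigma_sigma: "sigma m s \<circ> sigma m s = id"
    by (simp add: sigma_def fun_eq_iff refl_map_refl_map)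
  obtain w' where w': "w' \<in> coxW m" "w' \<circ> w = id" "w \<circ> w' = id"
    using step by blast
  have "preserves_coxB m (sigma m s \<circ> w)"
    using step coxB_refl_map[OF cm ss] by (simp add: preserves_coxB_def sigma_def)
  moreover have "preserves_lin_comb (sigma m s \<circ> w)"
    using step by (simp add: preserves_lin_comb_def sigma_def refl_map_lin_comb)
  moreover have "w' \<circ> sigma m s \<in> coxW m"
    using coxW_comp[OF w'(1) sigma_in_coxW] .
  moreover have "(w' \<circ> sigma m s) \<circ> (sigma m s \<circ> w) = id"
    by (metis comp_assoc sigma_sigma w'(2) comp_id)
  moreover have "(sigma m s \<circ> w) \<circ> (w' \<circ> sigma m s) = id"
    by (metis comp_assoc sigma_sigma w'(3) comp_id)
  ultimately show ?case by blast
qed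

lemma refl_map_conj:
  assumes "coxeter_matrix m" "preserves_coxB m w" "preserves_lin_comb w" "w \<circ> w' = id"
  shows "refl_map m (w a) = w \<circ> refl_map m a \<circ> w'"
proof
  fix v
  have wv: "w (w' v) = v"
    using assms(4) by (metis comp_apply id_apply)
  have "(w \<circ> refl_map m a \<circ> w') v = w (\<lambda>t. w' v t + (-2 * coxB m a (w' v)) * a t)"
    by (simp only: refl_map_eq comp_apply)
  also have "\<dots> = (\<lambda>t. v t + (-2 * coxB m (w a) v) * w a t)"
    using assms(2,3) wv unfolding preserves_coxB_def preserves_lin_comb_def by metis
  finally show "refl_map m (w a) v = (w \<circ> refl_map m a \<circ> w') v"
    by (simp only: refl_map_eq)
qed

lemma refl_map_simple_root_conj:
  assumes "coxeter_matrix m" "w \<in> coxW m" "w \<circ> w' = id"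
  shows "refl_map m (w (simple_root s)) = w \<circ> sigma m s \<circ> w'"
  using refl_map_conj[OF assms(1) _ _ assms(3)] coxW_invertible_isometry[OF assms(1,2)]
  by (simp add: sigma_def)

lemma coxB_root_self: "coxeter_matrix m \<Longrightarrow> a \<in> roots m \<Longrightarrow> coxB m a a = 1"
  using coxW_invertible_isometry coxB_simple_root_self
  by (fastforce simp: roots_def preserves_coxB_def)

lemma refl_map_root_op:
  assumes "coxeter_matrix m" "b \<in> roots m"
  shows "refl_map m (root_op m a b) = quandle_op (refl_map m a) (refl_map m b)"
proof -
  have "coxB m b b = 1"
    using coxB_root_self[OF assms] .
  then have "refl_map m b \<circ> refl_map m b = id" "preserves_coxB m (refl_map m b)"
    "preserves_lin_comb (refl_map m b)"
    using coxB_refl_map[OF assms(1)]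
    by (simp_all add: fun_eq_iff refl_map_refl_map preserves_coxB_def preserves_lin_comb_def
        refl_map_lin_comb)
  then show ?thesis
    using refl_map_conj[OF assms(1)] by (simp add: root_op_def quandle_op_def)
qed

lemma refl_map_root_in_coxW:
  assumes "coxeter_matrix m" "b \<in> roots m"
  shows "refl_map m b \<in> coxW m"
proof -
  obtain w s where b: "b = w (simple_root s)" "w \<in> coxW m"
    using assms(2) by (auto simp: roots_def)
  obtain w' where "w' \<in> coxW m" "w \<circ> w' = id"
    using coxW_invertible_isometry[OF assms(1) b(2)] by blast
  then show ?thesis
    using refl_map_simple_root_conj[OF assms(1) b(2)] b coxW_comp sigma_in_coxW by metis
qed

lemma root_op_in_roots:
  assumes "coxeter_matrix m" "a \<in> roots m" "b \<in> roots m"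
  shows "root_op m a b \<in> roots m"
proof -
  obtain v r where "a = v (simple_root r)" "v \<in> coxW m"
    using assms(2) by (auto simp: roots_def)
  then have "root_op m a b = (refl_map m b \<circ> v) (simple_root r)"
    "refl_map m b \<circ> v \<in> coxW m"
    using coxW_comp refl_map_root_in_coxW[OF assms(1,3)] by (auto simp: root_op_def)
  then show ?thesis
    unfolding roots_def by blast
qed

lemma refl_map_root_in_coxQ:
  assumes "coxeter_matrix m" "a \<in> roots m"
  shows "refl_map m a \<in> coxQ m"
proof -
  obtain w s where a: "a = w (simple_root s)" "w \<in> coxW m"
    using assms(2) by (auto simp: roots_def)
  obtain w' where w': "w' \<in> coxW m" "w' \<circ> w = id" "w \<circ> w' = id"
    using coxW_invertible_isometry[OF assms(1) a(2)] by blast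
  have "inv_into UNIV w' = w"
    using w' by (intro inv_equality) (metis comp_apply id_apply)+
  then show ?thesis
    using refl_map_simple_root_conj[OF assms(1) a(2) w'(3)] a w'(1)
    by (auto simp: coxQ_def)
qed

lemma coxQ_subset_refl_map_roots:
  assumes "coxeter_matrix m"
  shows "coxQ m \<subseteq> refl_map m ` roots m"
proof
  fix x assume "x \<in> coxQ m"
  then obtain w s where x: "x = inv_into UNIV w \<circ> sigma m s \<circ> w" "w \<in> coxW m"
    by (auto simp: coxQ_def)
  obtain w' where w': "w' \<in> coxW m" "w' \<circ> w = id" "w \<circ> w' = id"
    using coxW_invertible_isometry[OF assms x(2)] by blast
  have "inv_into UNIV w = w'"
    using w' by (intro inv_equality) (metis comp_apply id_apply)+
  then have "x = refl_map m (w' (simple_root s))"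
    using refl_map_simple_root_conj[OF assms w'(1,2)] x by simp
  moreover have "w' (simple_root s) \<in> roots m"
    using w'(1) by (auto simp: roots_def)
  ultimately show "x \<in> refl_map m ` roots m" by blast
qed

lemma refl_map_eq_imp_sign:
  assumes "coxB m a a = 1" "coxB m b b = 1" "refl_map m a = refl_map m b"
  shows "b = a \<or> b = (\<lambda>t. - a t)"
proof -
  define c where "c = coxB m b a"
  have "refl_map m a a = refl_map m b a"
    using assms(3) by simp
  then have a: "a = (\<lambda>t. c * b t)"
    using assms(1) by (simp add: refl_map_def c_def fun_eq_iff)
  have "coxB m a a = c * c * coxB m b b"
    by (subst (1 2) a) (simp add: coxB_scale_left coxB_scale_right)
  then have "c = 1 \<or> c = -1"
    using assms(1,2) by (simp add: square_eq_1_iff)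
  then show ?thesis
    using a by (auto simp: fun_eq_iff)
qed

lemma ad_eq_neg_root:
  assumes "coxeter_matrix m" "a \<in> roots m"
  shows "ad_eq (roots m) (root_op m) [((\<lambda>t. - a t), True)] [(a, True)]"
proof -
  have "root_op m a a = (\<lambda>t. - a t)"
    using coxB_root_self[OF assms] by (simp add: root_op_def refl_map_def fun_eq_iff)
  moreover have "ad_eq (roots m) (root_op m) ([] @ [(a, False), (a, True), (a, True)] @ [])
                                              ([] @ [(root_op m a a, True)] @ [])"
    by (rule ad_eq.rel) (use assms in auto)
  moreover have "ad_eq (roots m) (root_op m) ([] @ [(a, False), (a, \<not> False)] @ [(a, True)])
                                              ([] @ [(a, True)])"
    by (rule ad_eq.cancel) (use assms in auto)
  ultimately show ?thesis
    by simp (metis ad_eq.sym ad_eq.trans)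
qed

lemma ad_eq_if_refl_map_eq:
  assumes "coxeter_matrix m" "a \<in> roots m" "b \<in> roots m" "refl_map m a = refl_map m b"
  shows "ad_eq (roots m) (root_op m) [(a, True)] [(b, True)]"
proof -
  have "a = b \<or> a = (\<lambda>t. - b t)"
    using refl_map_eq_imp_sign[OF coxB_root_self[OF assms(1,3)] coxB_root_self[OF assms(1,2)]]
      assms(4) by simp
  then show ?thesis
    using ad_eq_neg_root[OF assms(1,3)] assms(3) by (auto intro: ad_eq.refl)
qed

theorem theorem6p3:
  fixes m :: "'s::finite \<Rightarrow> 's \<Rightarrow> enat"
  assumes "coxeter_matrix m"
  shows "\<exists>h. h \<in> iso (Ad (roots m) (root_op m)) (Ad (coxQ m) quandle_op) \<and>
             (\<forall>\<alpha>\<in>roots m. h (ad_gen (roots m) (root_op m) \<alpha>)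
                             = ad_gen (coxQ m) quandle_op (refl_map m \<alpha>))"
proof -
  interpret rack_quotient "roots m" "root_op m" "coxQ m" quandle_op "refl_map m"
    using assms
    by unfold_locales (simp_all add: root_op_in_roots refl_map_root_in_coxQ refl_map_root_op
        coxQ_subset_refl_map_roots ad_eq_if_refl_map_eq)
  show ?thesis
    using Ad_map_iso Ad_map_ad_gen by blast
qed

end
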